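(* Let $B:=\{\omega\in X\mid\xi(\omega)\in\chi_{\mathcal{G}}(\omega)\}$. Then $B\in\mathcal{B}_X$ and $\mathbb{P}(B)=1$.
   Context: $X$ is a Polish space with Borel $\sigma$-algebra $\mathcal{B}_X$, $\mathbb{P}$ a probability measure on $(X,\mathcal{B}_X)$, $\mathcal{G}\subseteq\mathcal{B}_X$ a countably generated sub-$\sigma$-algebra, and $\xi:X\to\mathbb{R}^d$ Borel measurable. For $\omega\in X$ let $A_\omega=\bigcap\{A\in\mathcal{G}\mid\omega\in A\}$. Fix a proper regular conditional probability $\mathbb{P}_{\mathcal{G}}:X\times\mathcal{B}_X\to[0,1]$, i.e.: (a) $\mathbb{P}_{\mathcal{G}}(\omega,\cdot)$ is a probability measure for every $\omega$; (b) for each $B\in\mathcal{B}_X$, $\mathbb{P}_{\mathcal{G}}(\cdot,B)$ is $\mathcal{G}$-measurable and a version of $E_{\mathbb{P}}[\mathbf{1}_B\mid\mathcal{G}]$; (c) there is $N\in\mathcal{G}$ with $\mathbb{P}(N)=0$ such that $\mathbb{P}_{\mathcal{G}}(\omega,B)=\mathbf{1}_B(\omega)$ for all $\omega\in X\setminus N$, $B\in\mathcal{G}$, and $\mathbb{P}_{\mathcal{G}}(\omega,A_\omega)=1$ for $\omega\in X\setminus N$; (d) $\mathbb{P}(A\cap B)=\int_A\mathbb{P}_{\mathcal{G}}(\omega,B)\,\mathbb{P}(d\omega)$ for $A\in\mathcal{G}$, $B\in\mathcal{B}_X$. Define $P_\xi(\omega,C)=\mathbb{P}_{\mathcal{G}}(\omega,\{\tilde\omega\in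 A_\omega\mid\xi(\tilde\omega)\in C\})$ for Borel $C\subseteq\mathbb{R}^d$, and the random set $\chi_{\mathcal{G}}(\omega)=\{x\in\mathbb{R}^d\mid P_\xi(\omega,B_\varepsilon(x))>0\ \forall\varepsilon>0\}$ for $\omega\in X\setminus N$ (the support of $P_\xi(\omega,\cdot)$), and $\chi_{\mathcal{G}}(\omega)=\mathbb{R}^d$ for $\omega\in N$; $B_\varepsilon(x)$ is the open ball of radius $\varepsilon$ centered at $x$. *)

theory Defs
  imports "HOL-Probability.Probability"
begin

definition atom_of :: "'a set set \<Rightarrow> 'a \<Rightarrow> 'a set" where
  "atom_of G \<omega> = \<Inter>{A \<in> G. \<omega> \<in> A}"

definition cond_law :: "'a set set \<Rightarrow> ('a \<Rightarrow> 'a measure) \<Rightarrow> ('a \<Rightarrow> 'b) \<Rightarrow> 'a \<Rightarrow> 'b set \<Rightarrow> real" where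
  "cond_law G K \<xi> \<omega> C = measure (K \<omega>) {w \<in> atom_of G \<omega>. \<xi> w \<in> C}"

definition chi_set :: "'a set set \<Rightarrow> ('a \<Rightarrow> 'a measure) \<Rightarrow> ('a \<Rightarrow> 'b::metric_space) \<Rightarrow> 'a set \<Rightarrow> 'a \<Rightarrow> 'b set" where
  "chi_set G K \<xi> N \<omega> =
     (if \<omega> \<in> N then UNIV
      else {x. \<forall>\<epsilon>>0. cond_law G K \<xi> \<omega> (ball x \<epsilon>) > 0})"

end

theory Submission
  imports Defs
begin

text \<open>Let \<open>\<B>\<close> be a countable base of the topology of \<open>\<real>\<^sup>d\<close>. Off \<open>N\<close> the
  kernel lives on the atom \<open>A\<^sub>\<omega>\<close>, so \<open>P\<^sub>\<xi>(\<omega>, U) = \<P>\<^sub>\<G>(\<omega>, \<xi>\<inverse>(U))\<close> for open \<open>U\<close>, and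
  \<open>\<xi>(\<omega>)\<close> misses the support exactly when some \<open>U \<in> \<B>\<close> contains \<open>\<xi>(\<omega>)\<close> although
  \<open>\<P>\<^sub>\<G>(\<omega>, \<xi>\<inverse>(U)) = 0\<close>. For fixed \<open>U\<close> the set \<open>Z\<^sub>U\<close> where this conditional probability
  vanishes lies in \<open>\<G>\<close>, hence \<open>\<P>(Z\<^sub>U \<inter> \<xi>\<inverse>(U)) = \<integral>\<^bsub>Z\<^sub>U\<^esub> \<P>\<^sub>\<G>(\<omega>, \<xi>\<inverse>(U)) d\<P> = 0\<close>, and the
  exceptional set is a countable union of such null sets.\<close>

lemma (in prob_space) prob_Int_eq_of_prob_one:
  assumes A: "prob A = 1" and S: "S \<in> events"
  shows "prob (A \<inter> S) = prob S"
proof -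
  have "A \<in> events" using A measure_notin_sets by fastforce
  then have "space M - A \<in> null_sets M"
    using prob_compl A by (simp add: null_sets_def emeasure_eq_measure)
  moreover have "A \<inter> S = S - (space M - A)" using sets.sets_into_space[OF S] by blast
  ultimately show ?thesis using measure_Diff_null_set[OF S] by simp
qed

lemma positive_on_balls_iff_positive_on_basis:
  fixes \<mu> :: "'b::metric_space set \<Rightarrow> real"
  assumes \<B>: "topological_basis \<B>"
    and mono: "\<And>U V. open U \<Longrightarrow> open V \<Longrightarrow> U \<subseteq> V \<Longrightarrow> \<mu> U \<le> \<mu> V"
  shows "(\<forall>\<epsilon>>0. 0 < \<mu> (ball x \<epsilon>)) \<longleftrightarrow> (\<forall>U\<in>\<B>. x \<in> U \<longrightarrow> 0 < \<mu> U)"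
proof safe
  fix U assume balls: "\<forall>\<epsilon>>0. 0 < \<mu> (ball x \<epsilon>)" and "U \<in> \<B>" "x \<in> U"
  then have "open U" using \<B> topological_basis_open by blast
  then obtain \<epsilon> where "\<epsilon> > 0" "ball x \<epsilon> \<subseteq> U" using \<open>x \<in> U\<close> open_contains_ball by blast
  then show "0 < \<mu> U" using balls mono[of "ball x \<epsilon>" U] \<open>open U\<close> by force
next
  fix \<epsilon> :: real assume basis: "\<forall>U\<in>\<B>. x \<in> U \<longrightarrow> 0 < \<mu> U" and "\<epsilon> > 0"
  then obtain U where "U \<in> \<B>" "x \<in> U" "U \<subseteq> ball x \<epsilon>"
    using topological_basisE[OF \<B>, of "ball x \<epsilon>" x] by auto
  then show "0 < \<mu> (ball x \<epsilon>)"
    using basis mono[of U "ball x \<epsilon>"] topological_basis_open[OF \<B>] by force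
qed

lemma chi_set_iff_basis:
  fixes \<xi> :: "'a::topological_space \<Rightarrow> 'b::metric_space"
  assumes "\<omega> \<notin> N" and \<B>: "topological_basis \<B>" and \<xi>: "\<xi> \<in> borel_measurable borel"
    and K: "prob_space (K \<omega>)" "sets (K \<omega>) = sets borel"
    and atom: "measure (K \<omega>) (atom_of G \<omega>) = 1"
  shows "x \<in> chi_set G K \<xi> N \<omega> \<longleftrightarrow> (\<forall>U\<in>\<B>. x \<in> U \<longrightarrow> 0 < measure (K \<omega>) (\<xi> -` U))"
proof -
  interpret prob_space "K \<omega>" by (rule K(1))
  have \<xi>_events: "\<xi> -` U \<in> events" if "open U" for U
    using measurable_sets_borel[OF \<xi>] that K(2) by simp
  have "cond_law G K \<xi> \<omega> U = prob (\<xi> -` U)" if "open U" for U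
  proof -
    have "{w \<in> atom_of G \<omega>. \<xi> w \<in> U} = atom_of G \<omega> \<inter> \<xi> -` U" by auto
    then show ?thesis
      unfolding cond_law_def using prob_Int_eq_of_prob_one[OF atom \<xi>_events[OF that]] by simp
  qed
  then have "x \<in> chi_set G K \<xi> N \<omega> \<longleftrightarrow> (\<forall>\<epsilon>>0. 0 < prob (\<xi> -` ball x \<epsilon>))"
    using \<open>\<omega> \<notin> N\<close> by (simp add: chi_set_def)
  also have "\<dots> \<longleftrightarrow> (\<forall>U\<in>\<B>. x \<in> U \<longrightarrow> 0 < prob (\<xi> -` U))"
    using \<xi>_events
    by (intro positive_on_balls_iff_positive_on_basis[OF \<B>] finite_measure_mono) auto
  finally show ?thesis .
qed

lemma null_sets_where_kernel_vanishes:
  assumes M: "finite_measure M" "sets M = sets borel"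
    and G: "sigma_algebra UNIV G" "G \<subseteq> sets borel"
    and B: "B \<in> sets borel"
    and K_meas: "(\<lambda>\<omega>. measure (K \<omega>) B) \<in> borel_measurable (sigma UNIV G)"
    and K_disint: "\<And>A. A \<in> G \<Longrightarrow> measure M (A \<inter> B) = (\<integral>\<omega>\<in>A. measure (K \<omega>) B \<partial>M)"
  shows "{\<omega>. measure (K \<omega>) B = 0} \<inter> B \<in> null_sets M"
proof -
  define Z where "Z = {\<omega>. measure (K \<omega>) B = 0}"
  have "sets (sigma UNIV G) = G" using sigma_algebra.sigma_sets_eq[OF G(1)] by simp
  then have "Z \<in> G"
    using measurable_sets[OF K_meas, of "{0}"] by (simp add: Z_def vimage_def)
  have "(\<lambda>\<omega>. indicator Z \<omega> *\<^sub>R measure (K \<omega>) B) = (\<lambda>_. 0)"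
    by (auto simp: Z_def indicator_def)
  then have "measure M (Z \<inter> B) = 0"
    using K_disint[OF \<open>Z \<in> G\<close>] by (simp add: set_lebesgue_integral_def)
  moreover have "Z \<inter> B \<in> sets M" using \<open>Z \<in> G\<close> G(2) B M(2) by auto
  ultimately show ?thesis
    unfolding Z_def by (simp add: null_sets_def finite_measure.emeasure_eq_measure[OF M(1)])
qed

theorem lemma5p5:
  fixes M :: "'a::polish_space measure"
    and G :: "'a set set"
    and \<xi> :: "'a \<Rightarrow> 'b::euclidean_space"
    and K :: "'a \<Rightarrow> 'a measure"
    and N :: "'a set"
  assumes M_borel: "sets M = sets borel"
    and M_prob: "prob_space M"
    and G_sub: "G \<subseteq> sets borel"
    and G_cg: "\<exists>C. countable C \<and> C \<subseteq> Pow UNIV \<and> G = sigma_sets UNIV C"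
    and \<xi>_meas: "\<xi> \<in> borel_measurable borel"
    and K_prob: "\<And>\<omega>. prob_space (K \<omega>)"
    and K_sets: "\<And>\<omega>. sets (K \<omega>) = sets borel"
    and K_meas: "\<And>B. B \<in> sets borel \<Longrightarrow> (\<lambda>\<omega>. measure (K \<omega>) B) \<in> borel_measurable (sigma UNIV G)"
    and K_disint: "\<And>A B. A \<in> G \<Longrightarrow> B \<in> sets borel \<Longrightarrow>
                     measure M (A \<inter> B) = (\<integral>\<omega>\<in>A. measure (K \<omega>) B \<partial>M)"
    and N_G: "N \<in> G"
    and N_null: "measure M N = 0"
    and K_proper: "\<And>\<omega> B. \<omega> \<notin> N \<Longrightarrow> B \<in> G \<Longrightarrow> measure (K \<omega>) B = indicator B \<omega>"
    and K_atom: "\<And>\<omega>. \<omega> \<notin> N \<Longrightarrow> measure (K \<omega>) (atom_of G \<omega>) = 1"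
  shows "{\<omega>. \<xi> \<omega> \<in> chi_set G K \<xi> N \<omega>} \<in> sets borel
         \<and> measure M {\<omega>. \<xi> \<omega> \<in> chi_set G K \<xi> N \<omega>} = 1"
proof -
  interpret prob_space M by (rule M_prob)
  have G_algebra: "sigma_algebra UNIV G" using G_cg sigma_algebra_sigma_sets by blast
  obtain \<B> :: "'b set set" where "countable \<B>" and \<B>: "topological_basis \<B>"
    using ex_countable_basis by blast
  define Z where "Z = (\<Union>U\<in>\<B>. {\<omega>. measure (K \<omega>) (\<xi> -` U) = 0} \<inter> \<xi> -` U) - N"
  have "\<xi> -` U \<in> sets borel" if "U \<in> \<B>" for U
    using measurable_sets_borel[OF \<xi>_meas] topological_basis_open[OF \<B> that] by simp
  then have "Z \<in> null_sets M"
    unfolding Z_def using \<open>countable \<B>\<close> N_G G_sub M_borel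
    by (intro null_set_Diff null_sets_UN' null_sets_where_kernel_vanishes[OF _ M_borel G_algebra G_sub]
        K_meas K_disint) (auto simp: finite_measure_axioms)
  moreover have "\<xi> \<omega> \<in> chi_set G K \<xi> N \<omega> \<longleftrightarrow> \<omega> \<notin> Z" for \<omega>
  proof (cases "\<omega> \<in> N")
    case False
    then show ?thesis
      using chi_set_iff_basis[where K = K, OF False \<B> \<xi>_meas K_prob[of \<omega>] K_sets[of \<omega>] K_atom[OF False]]
        measure_nonneg[of "K \<omega>"] by (auto simp: Z_def less_le)
  qed (simp add: Z_def chi_set_def)
  then have "{\<omega>. \<xi> \<omega> \<in> chi_set G K \<xi> N \<omega>} = space M - Z"
    using sets_eq_imp_space_eq[OF M_borel] by auto
  ultimately show ?thesis
    using measure_Diff_null_set[of "space M" M Z] M_borel by (auto simp: prob_space)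
qed

end
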